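(* Fix a master $m$ with $L_m>0$ and a finite nonempty set $\Omega_m$ of workers serving it, with parameters $u_{m,n}>0$, $a_{m,n}>0$ for $n\in\Omega_m$. Consider the problem $$\min_{\{l_{m,n}\}_{n\in\Omega_m},\,t_m} \; t_m \quad\text{s.t.}\quad L_m-\sum_{n\in\Omega_m} l_{m,n}\left(1-e^{-\frac{u_{m,n}}{l_{m,n}}\left(t_m-a_{m,n}l_{m,n}\right)}\right)\le 0,\qquad l_{m,n}\ge 0\ \ \forall n\in\Omega_m.$$ For each $n\in\Omega_m$ define $$\phi_{m,n}=\frac{1}{u_{m,n}}\left[-\mathcal{W}_{-1}\!\left(-e^{-u_{m,n}a_{m,n}-1}\right)-1\right],$$ where $\mathcal{W}_{-1}$ is the lower branch of the Lambert W function (i.e. for $x\le -1$, $\mathcal{W}_{-1}(xe^x)=x$). Then the optimal load allocation and the minimum approximate completion time are $$l^*_{m,n}=\frac{L_m}{\phi_{m,n}\sum_{n'\in \Omega_m} \frac{u_{m,n'}}{1+u_{m,n'}\phi_{m,n'}}},\qquad t_m^*= \frac{L_m}{\sum_{n'\in \Omega_m} \frac{u_{m,n'}}{1+u_{m,n'}\phi_{m,n'}}}.$$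
   Context: Setting: master $m$ needs $L_m$ results (products of MDS-coded rows of its matrix with its vector); worker $n\in\Omega_m$ is allocated $l_{m,n}$ coded rows, and the time for worker $n$ to process $l$ rows is a shifted exponential random variable with $\mathbb{P}[T\le t]=1-e^{-\frac{u_{m,n}}{l}(t-a_{m,n}l)}$ for $t\ge a_{m,n}l$ and $0$ otherwise. The constraint says the expected number of results received by time $t_m$ is at least $L_m$; load values are treated as nonnegative reals. *)

theory Defs
  imports Complex_Main
begin

definition lambertW_m1 :: "real \<Rightarrow> real" where
  "lambertW_m1 y = (THE x. x \<le> -1 \<and> x * exp x = y)"

definition feasible ::
  "'w set \<Rightarrow> ('w \<Rightarrow> real) \<Rightarrow> ('w \<Rightarrow> real) \<Rightarrow> real \<Rightarrow> ('w \<Rightarrow> real) \<Rightarrow> real \<Rightarrow> bool" where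
  "feasible \<Omega> u a L l t \<longleftrightarrow>
     L - (\<Sum>n\<in>\<Omega>. l n * (1 - exp (- (u n / l n) * (t - a n * l n)))) \<le> 0
     \<and> (\<forall>n\<in>\<Omega>. l n \<ge> 0)"

definition phi :: "real \<Rightarrow> real \<Rightarrow> real" where
  "phi u a = (1 / u) * (- lambertW_m1 (- exp (- u * a - 1)) - 1)"

end

theory Submission
  imports Defs
begin

(* The Lambert-W expression makes \<phi> the positive root of
   exp (u a) (1 + u \<phi>) = exp (u \<phi>).  With that equation, a worker loaded with l
   delivers by time t exactly  t u / (1 + u \<phi>) - l (e^w - 1 - w) / (1 + u \<phi>)
   expected results, where w = u (\<phi> - t / l).  Since e^w \<ge> 1 + w, each worker
   contributes at most t u / (1 + u \<phi>), with equality iff l \<phi> = t.  Summing,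
   feasibility forces L \<le> t S, i.e. t \<ge> L / S, and at t = L / S every worker must
   attain its bound, which pins the load to l = t / \<phi>. *)

lemma x_exp_x_strict_antimono:
  fixes p q :: real
  assumes "p < q" and "q \<le> -1"
  shows "q * exp q < p * exp p"
proof -
  define d where "d = q - p"
  have "d > 0" using assms by (simp add: d_def)
  have "q * exp d < q * (1 + d)"
    using exp_minus_greater[of "-d"] \<open>d > 0\<close> assms by (intro mult_strict_left_mono_neg) auto
  also have "\<dots> \<le> p"
    using mult_nonneg_nonpos[of d "1 + q"] \<open>d > 0\<close> assms by (simp add: d_def algebra_simps)
  finally have "q * exp d * exp p < p * exp p" by (rule mult_strict_right_mono) simp
  moreover have "q * exp q = q * exp d * exp p" by (simp add: d_def flip: exp_add)
  ultimately show ?thesis by linarith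
qed

lemma inj_on_x_exp_x: "inj_on (\<lambda>x::real. x * exp x) {..-1}"
  by (rule inj_onI) (metis atMost_iff less_irrefl linorder_neq_iff x_exp_x_strict_antimono)

lemma lambertW_m1_minus_exp:
  fixes K :: real
  assumes "K \<ge> 1"
  shows "lambertW_m1 (- exp (-K)) \<le> -1"
    and "lambertW_m1 (- exp (-K)) * exp (lambertW_m1 (- exp (-K))) = - exp (-K)"
proof -
  have "2 * K \<le> exp K"
    using exp_lower_Taylor_quadratic[of K] assms power2_eq_square[of "K - 1"]
      zero_le_power2[of "K - 1"] by (simp add: power2_eq_square algebra_simps)
  then have "- exp (-K) \<le> (-2 * K) * exp (-2 * K)"
    using mult_right_mono[of "2 * K" "exp K" "exp (-2 * K)"] by (simp flip: exp_add)
  moreover have "(-1) * exp (-1) \<le> - exp (-K)"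
    using assms by simp
  ultimately obtain x where x: "x \<le> -1" "x * exp x = - exp (-K)"
    using IVT2[of "\<lambda>x. x * exp x" "-1" "- exp (-K)" "-2 * K"] assms
    by (force intro!: continuous_intros)
  then have "\<exists>!x. x \<le> -1 \<and> x * exp x = - exp (-K)"
    using x inj_on_x_exp_x by (intro ex1I[of _ x]) (auto simp: inj_on_def)
  then have "lambertW_m1 (- exp (-K)) \<le> -1 \<and>
      lambertW_m1 (- exp (-K)) * exp (lambertW_m1 (- exp (-K))) = - exp (-K)"
    unfolding lambertW_m1_def by (rule theI')
  then show "lambertW_m1 (- exp (-K)) \<le> -1"
    and "lambertW_m1 (- exp (-K)) * exp (lambertW_m1 (- exp (-K))) = - exp (-K)"
    by auto
qed

lemma lambertW_m1_minus_exp_less: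
  fixes K :: real
  assumes "K > 1"
  shows "lambertW_m1 (- exp (-K)) < -1"
  using lambertW_m1_minus_exp[of K] assms by (metis less_eq_real_def exp_inj_iff
      mult_minus_left mult_1 neg_equal_iff_equal order_less_irrefl)

lemma phi_pos:
  assumes "u > 0" and "a > 0"
  shows "phi u a > 0"
  using lambertW_m1_minus_exp_less[of "u * a + 1"] assms by (simp add: phi_def)

lemma exp_mult_phi:
  assumes "u \<noteq> 0" and "u * a \<ge> 0"
  shows "exp (u * a) * (1 + u * phi u a) = exp (u * phi u a)"
proof -
  define W where "W = lambertW_m1 (- exp (- (u * a + 1)))"
  have W: "W * exp W = - exp (- (u * a + 1))"
    using lambertW_m1_minus_exp(2)[of "u * a + 1"] assms by (simp add: W_def)
  have "u * phi u a = - W - 1"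
    using assms by (simp add: phi_def W_def)
  moreover have "- W = exp (- (u * a + 1)) * exp (- W)"
    using W by (simp add: exp_minus field_simps)
  ultimately show ?thesis
    by (simp flip: exp_add)
qed

definition expected_results :: "real \<Rightarrow> real \<Rightarrow> real \<Rightarrow> real \<Rightarrow> real" where
  "expected_results u a l t = l * (1 - exp (- (u / l) * (t - a * l)))"

lemma feasible_iff_expected_results:
  "feasible \<Omega> u a L l t \<longleftrightarrow>
     L \<le> (\<Sum>n\<in>\<Omega>. expected_results (u n) (a n) (l n) t) \<and> (\<forall>n\<in>\<Omega>. l n \<ge> 0)"
  by (simp add: feasible_def expected_results_def)

lemma expected_results_zero_load [simp]: "expected_results u a 0 t = 0"
  by (simp add: expected_results_def)

lemma exp_mult_eq_imp_pos:
  fixes u a f :: real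
  assumes "exp (u * a) * (1 + u * f) = exp (u * f)"
  shows "1 + u * f > 0"
  using assms by (metis exp_gt_zero zero_less_mult_pos)

lemma expected_results_gap:
  fixes u a f l t :: real
  assumes E: "exp (u * a) * (1 + u * f) = exp (u * f)" and "l \<noteq> 0"
  defines "w \<equiv> u * (f - t / l)"
  shows "expected_results u a l t = t * (u / (1 + u * f)) - l * (exp w - (1 + w)) / (1 + u * f)"
proof -
  have pos: "1 + u * f > 0"
    using E by (rule exp_mult_eq_imp_pos)
  have "exp (- (u / l) * (t - a * l)) = exp (u * a) * exp (- (u * t / l))"
    using \<open>l \<noteq> 0\<close> by (simp add: algebra_simps flip: exp_add)
  also have "\<dots> = exp (u * f) * exp (- (u * t / l)) / (1 + u * f)"
    using pos by (simp add: eq_divide_eq flip: E)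
  also have "\<dots> = exp w / (1 + u * f)"
    by (simp add: w_def algebra_simps flip: exp_add)
  finally have "expected_results u a l t = l * (1 - exp w / (1 + u * f))"
    by (simp add: expected_results_def)
  moreover have "l * (1 - z / (1 + u * f)) = t * (u / (1 + u * f)) - l * (z - (1 + w)) / (1 + u * f)"
    for z
  proof -
    have "t * u - l * (z - (1 + w)) = l * (1 + u * f) - l * z"
      using \<open>l \<noteq> 0\<close> by (simp add: w_def algebra_simps)
    then have "t * (u / (1 + u * f)) - l * (z - (1 + w)) / (1 + u * f)
        = (l * (1 + u * f) - l * z) / (1 + u * f)"
      by (metis diff_divide_distrib times_divide_eq_right)
    also have "\<dots> = l * (1 - z / (1 + u * f))"
      using pos by (simp add: field_simps)
    finally show ?thesis
      by simp
  qed
  ultimately show ?thesis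
    by simp
qed

lemma expected_results_eq_iff:
  fixes u a f l t :: real
  assumes E: "exp (u * a) * (1 + u * f) = exp (u * f)" and "u \<noteq> 0" and "l > 0"
  shows "expected_results u a l t = t * (u / (1 + u * f)) \<longleftrightarrow> l * f = t"
proof -
  define w where "w = u * (f - t / l)"
  have "expected_results u a l t = t * (u / (1 + u * f)) \<longleftrightarrow> exp w = 1 + w"
    using expected_results_gap[OF E, of l t] exp_mult_eq_imp_pos[OF E] \<open>l > 0\<close>
    by (simp add: w_def)
  also have "\<dots> \<longleftrightarrow> w = 0"
    using exp_minus_greater[of "- w"] by auto
  also have "\<dots> \<longleftrightarrow> l * f = t"
    using \<open>u \<noteq> 0\<close> \<open>l > 0\<close> by (auto simp: w_def field_simps)
  finally show ?thesis .
qed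

lemma expected_results_le:
  fixes u a f l t :: real
  assumes E: "exp (u * a) * (1 + u * f) = exp (u * f)" and "u \<ge> 0" and "l \<ge> 0"
  shows "expected_results u a l t \<le> max t 0 * (u / (1 + u * f))"
proof (cases "l = 0")
  case True
  then show ?thesis
    using exp_mult_eq_imp_pos[OF E] \<open>u \<ge> 0\<close> by simp
next
  case False
  have "expected_results u a l t \<le> t * (u / (1 + u * f))"
    using expected_results_gap[OF E False, of t] exp_mult_eq_imp_pos[OF E] \<open>l \<ge> 0\<close>
    by simp
  also have "\<dots> \<le> max t 0 * (u / (1 + u * f))"
    using exp_mult_eq_imp_pos[OF E] \<open>u \<ge> 0\<close> by (intro mult_right_mono) auto
  finally show ?thesis .
qed

lemma expected_results_less:
  fixes u a f l t :: real
  assumes E: "exp (u * a) * (1 + u * f) = exp (u * f)" and "u > 0" and "l \<ge> 0"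
    and "t > 0" and "l * f \<noteq> t"
  shows "expected_results u a l t < t * (u / (1 + u * f))"
proof (cases "l = 0")
  case True
  then show ?thesis
    using exp_mult_eq_imp_pos[OF E] assms by simp
next
  case False
  then show ?thesis
    using expected_results_le[OF E, of l t] expected_results_eq_iff[OF E, of l t] assms
    by (simp add: order_less_le)
qed

lemma sum_expected_results_le:
  fixes u a f l :: "'w \<Rightarrow> real"
  assumes "\<forall>n\<in>\<Omega>. exp (u n * a n) * (1 + u n * f n) = exp (u n * f n)"
    and "\<forall>n\<in>\<Omega>. u n \<ge> 0" and "\<forall>n\<in>\<Omega>. l n \<ge> 0"
  shows "(\<Sum>n\<in>\<Omega>. expected_results (u n) (a n) (l n) t)
    \<le> max t 0 * (\<Sum>n\<in>\<Omega>. u n / (1 + u n * f n))"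
  unfolding sum_distrib_left using assms by (intro sum_mono expected_results_le) auto

lemma sum_expected_results_less:
  fixes u a f l :: "'w \<Rightarrow> real"
  assumes "finite \<Omega>" and "\<forall>n\<in>\<Omega>. exp (u n * a n) * (1 + u n * f n) = exp (u n * f n)"
    and "\<forall>n\<in>\<Omega>. u n > 0" and "\<forall>n\<in>\<Omega>. l n \<ge> 0" and "t > 0"
    and "m \<in> \<Omega>" and "l m * f m \<noteq> t"
  shows "(\<Sum>n\<in>\<Omega>. expected_results (u n) (a n) (l n) t)
    < t * (\<Sum>n\<in>\<Omega>. u n / (1 + u n * f n))"
  unfolding sum_distrib_left using assms
  by (intro sum_strict_mono_ex1 ballI bexI[of _ m] expected_results_le[THEN order_trans]
      expected_results_less) auto

lemma sum_expected_results_eq: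
  fixes u a f l :: "'w \<Rightarrow> real"
  assumes "\<forall>n\<in>\<Omega>. exp (u n * a n) * (1 + u n * f n) = exp (u n * f n)"
    and "\<forall>n\<in>\<Omega>. u n \<noteq> 0" and "\<forall>n\<in>\<Omega>. l n > 0" and "\<forall>n\<in>\<Omega>. l n * f n = t"
  shows "(\<Sum>n\<in>\<Omega>. expected_results (u n) (a n) (l n) t) = t * (\<Sum>n\<in>\<Omega>. u n / (1 + u n * f n))"
  unfolding sum_distrib_left using assms by (intro sum.cong refl) (metis expected_results_eq_iff)

theorem theorem1:
  fixes \<Omega> :: "'w set" and u a :: "'w \<Rightarrow> real" and L :: real
  assumes "finite \<Omega>" and "\<Omega> \<noteq> {}" and "L > 0"
    and "\<forall>n\<in>\<Omega>. u n > 0" and "\<forall>n\<in>\<Omega>. a n > 0"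
  defines "S \<equiv> (\<Sum>n'\<in>\<Omega>. u n' / (1 + u n' * phi (u n') (a n')))"
  defines "lstar \<equiv> (\<lambda>n. L / (phi (u n) (a n) * S))"
  defines "tstar \<equiv> L / S"
  shows "feasible \<Omega> u a L lstar tstar
    \<and> (\<forall>l t. feasible \<Omega> u a L l t \<longrightarrow> tstar \<le> t)
    \<and> (\<forall>l. feasible \<Omega> u a L l tstar \<longrightarrow> (\<forall>n\<in>\<Omega>. l n = lstar n))"
proof -
  define f where "f n = phi (u n) (a n)" for n
  have f_pos: "\<forall>n\<in>\<Omega>. f n > 0"
    and E: "\<forall>n\<in>\<Omega>. exp (u n * a n) * (1 + u n * f n) = exp (u n * f n)"
    using assms(4,5)
    by (auto simp: f_def phi_pos intro!: exp_mult_phi mult_nonneg_nonneg less_imp_le)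
  have S_eq: "S = (\<Sum>n\<in>\<Omega>. u n / (1 + u n * f n))"
    by (simp add: S_def f_def)
  have "S > 0"
    unfolding S_eq using assms(1,2,4) E by (intro sum_pos divide_pos_pos exp_mult_eq_imp_pos) auto
  then have L_eq: "L = tstar * S" and "tstar > 0"
    using \<open>L > 0\<close> by (simp_all add: tstar_def)
  have lstar: "\<forall>n\<in>\<Omega>. lstar n > 0 \<and> lstar n * f n = tstar"
    using f_pos \<open>S > 0\<close> \<open>L > 0\<close> by (auto simp: lstar_def tstar_def f_def)
  have "(\<Sum>n\<in>\<Omega>. expected_results (u n) (a n) (lstar n) tstar) = L"
    unfolding L_eq S_eq using assms(4) lstar by (intro sum_expected_results_eq[OF E]) auto
  then have "feasible \<Omega> u a L lstar tstar"
    using lstar by (simp add: feasible_iff_expected_results less_imp_le)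
  moreover have "tstar \<le> t" if "feasible \<Omega> u a L l t" for l t
  proof -
    have "tstar * S \<le> max t 0 * S"
      using that sum_expected_results_le[OF E, of l t] assms(4)
      by (auto simp: feasible_iff_expected_results S_eq L_eq less_imp_le)
    then show ?thesis
      using \<open>S > 0\<close> \<open>tstar > 0\<close> by (simp add: max_def split: if_splits)
  qed
  moreover have "l n = lstar n" if "feasible \<Omega> u a L l tstar" and "n \<in> \<Omega>" for l n
  proof -
    have "l n * f n = tstar"
      using that sum_expected_results_less[OF assms(1) E assms(4), of l tstar n]
        L_eq \<open>tstar > 0\<close>
      by (force simp: feasible_iff_expected_results S_eq)
    then show ?thesis
      using lstar f_pos \<open>n \<in> \<Omega>\<close> by (metis less_irrefl mult_right_cancel)
  qed
  ultimately show ?thesis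
    by blast
qed

end
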